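(* Let $T$ be a finite rooted tree with root $v_0$ and leaves identified with classes $1,\dots,K$; identify each non-root node $v_j$ with the set of classes in its subtree, and let $a(y)$ be the set of non-root nodes on the path from leaf $y$ to the root (including the leaf). For a probability vector $f=(f_1,\dots,f_K)$ and label $y$, define the unweighted loss $$\mathcal L(f,y)=-\sum_{v_j\in a(y)}\log\Big(\sum_{k\in v_j} f_k\Big).$$ Then $\mathcal L$ is not, in general, a proper scoring rule: there exist trees $T$ and probability vectors $\pi$ such that $f=\pi$ does not minimize $\sum_{k=1}^K\pi_k\,\mathcal L(f,k)$ over the probability simplex.
   Context: Proper scoring rule: a loss $\mathcal L(f,y)$ on probability vectors over $K$ classes is proper if, for every distribution $\pi$ of the label, the expected loss $\sum_k \pi_k\mathcal L(f,k)$ is minimized over the simplex at $f=\pi$. *)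

theory Defs
  imports Complex_Main
begin

(* A finite rooted tree on nodes {0..<N}: node 0 is the root, p is the parent map
   with p j < j for every non-root node j (so every node reaches the root). *)
definition valid_tree :: "nat \<Rightarrow> (nat \<Rightarrow> nat) \<Rightarrow> bool" where
  "valid_tree N p \<longleftrightarrow> N \<ge> 1 \<and> p 0 = 0 \<and> (\<forall>j\<in>{1..<N}. p j < j)"

definition is_anc :: "(nat \<Rightarrow> nat) \<Rightarrow> nat \<Rightarrow> nat \<Rightarrow> bool" where
  "is_anc p v w \<longleftrightarrow> (\<exists>n. (p ^^ n) w = v)"

definition is_leaf :: "nat \<Rightarrow> (nat \<Rightarrow> nat) \<Rightarrow> nat \<Rightarrow> bool" where
  "is_leaf N p v \<longleftrightarrow> v < N \<and> \<not> (\<exists>j\<in>{1..<N}. p j = v)"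

(* classes (0..K-1) in the subtree of v, where lf k is the leaf of class k *)
definition node_classes :: "(nat \<Rightarrow> nat) \<Rightarrow> nat \<Rightarrow> (nat \<Rightarrow> nat) \<Rightarrow> nat \<Rightarrow> nat set" where
  "node_classes p K lf v = {k. k < K \<and> is_anc p v (lf k)}"

definition path_nodes :: "nat \<Rightarrow> (nat \<Rightarrow> nat) \<Rightarrow> (nat \<Rightarrow> nat) \<Rightarrow> nat \<Rightarrow> nat set" where
  "path_nodes N p lf y = {j. 1 \<le> j \<and> j < N \<and> is_anc p j (lf y)}"

definition tree_loss ::
  "nat \<Rightarrow> (nat \<Rightarrow> nat) \<Rightarrow> nat \<Rightarrow> (nat \<Rightarrow> nat) \<Rightarrow> (nat \<Rightarrow> real) \<Rightarrow> nat \<Rightarrow> real" where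
  "tree_loss N p K lf f y =
     - (\<Sum>j\<in>path_nodes N p lf y. ln (\<Sum>k\<in>node_classes p K lf j. f k))"

definition expected_loss ::
  "nat \<Rightarrow> (nat \<Rightarrow> nat) \<Rightarrow> nat \<Rightarrow> (nat \<Rightarrow> nat) \<Rightarrow> (nat \<Rightarrow> real) \<Rightarrow> (nat \<Rightarrow> real) \<Rightarrow> real" where
  "expected_loss N p K lf \<pi> f = (\<Sum>k<K. \<pi> k * tree_loss N p K lf f k)"

definition prob_simplex :: "nat \<Rightarrow> (nat \<Rightarrow> real) set" where
  "prob_simplex K = {f. (\<forall>k<K. 0 \<le> f k) \<and> (\<Sum>k<K. f k) = 1}"

end

theory Submission
  imports Defs
begin

text \<open>
  Exchanging the two sums, the expected loss is
  \<open>- \<Sum>\<^sub>v \<pi>(v) ln f(v)\<close> over all non-root nodes \<open>v\<close>, where \<open>\<pi>(v)\<close>, \<open>f(v)\<close>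
  denote the mass of the classes below \<open>v\<close>. The mass of an inner node is thus
  charged once at the node and once more at its leaves, which rewards
  predictions that inflate deep subtrees. Concretely, let the root have an
  inner child with leaves for classes 0 and 1, and a leaf child for class 2.
  For \<open>\<pi> = (1/4, 1/4, 1/2)\<close> the expected loss at \<open>f = \<pi>\<close> is \<open>2 ln 2\<close>, while
  at the uniform \<open>f\<close> it is \<open>3/2 ln 3 - 1/2 ln 2\<close>, which is smaller because
  \<open>27 < 32\<close>.
\<close>

lemma path_nodes_eq_filter:
  "path_nodes N p lf y = {j. j \<in> {1..<N} \<and> is_anc p j (lf y)}"
  unfolding path_nodes_def by auto

lemma node_classes_eq_filter:
  "node_classes p K lf j = {k. k \<in> {..<K} \<and> is_anc p j (lf k)}"
  unfolding node_classes_def by auto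

lemma expected_loss_eq_node_sum:
  "expected_loss N p K lf \<pi> f =
     - (\<Sum>j\<in>{1..<N}. (\<Sum>k\<in>node_classes p K lf j. \<pi> k)
                       * ln (\<Sum>k\<in>node_classes p K lf j. f k))"
proof -
  let ?lnF = "\<lambda>j. ln (\<Sum>k\<in>node_classes p K lf j. f k)"
  have "expected_loss N p K lf \<pi> f =
          - (\<Sum>k<K. \<Sum>j\<in>{j. j \<in> {1..<N} \<and> is_anc p j (lf k)}. \<pi> k * ?lnF j)"
    unfolding expected_loss_def tree_loss_def path_nodes_eq_filter
    by (simp add: sum_distrib_left sum_negf)
  also have "\<dots> = - (\<Sum>j\<in>{1..<N}. \<Sum>k\<in>node_classes p K lf j. \<pi> k * ?lnF j)"
    unfolding node_classes_eq_filter by (subst sum.swap_restrict) auto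
  finally show ?thesis
    by (simp add: sum_distrib_right)
qed

definition cex_parent :: "nat \<Rightarrow> nat" where
  "cex_parent j = (if j = 2 \<or> j = 3 then 1 else 0)"

definition cex_leaf :: "nat \<Rightarrow> nat" where
  "cex_leaf k = k + 2"

lemma cex_parent_funpow:
  "(cex_parent ^^ n) w = (if n = 0 then w else if n = 1 then cex_parent w else 0)"
  by (induction n) (auto simp: cex_parent_def)

lemma is_anc_cex_iff:
  "is_anc cex_parent v w \<longleftrightarrow> v = w \<or> v = cex_parent w \<or> v = 0"
proof
  assume "is_anc cex_parent v w"
  then show "v = w \<or> v = cex_parent w \<or> v = 0"
    unfolding is_anc_def by (auto simp: cex_parent_funpow split: if_splits)
next
  have "(cex_parent ^^ 0) w = w" "(cex_parent ^^ 1) w = cex_parent w" "(cex_parent ^^ 2) w = 0"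
    by (simp_all add: cex_parent_funpow)
  then show "v = w \<or> v = cex_parent w \<or> v = 0 \<Longrightarrow> is_anc cex_parent v w"
    unfolding is_anc_def by metis
qed

lemma valid_tree_cex: "valid_tree 5 cex_parent"
  unfolding valid_tree_def cex_parent_def by auto

lemma leaves_cex: "{v. is_leaf 5 cex_parent v} = {2, 3, 4}"
  unfolding is_leaf_def cex_parent_def by (auto simp: eval_nat_numeral less_Suc_eq)

lemma bij_betw_cex_leaf: "bij_betw cex_leaf {..<3} {v. is_leaf 5 cex_parent v}"
  unfolding leaves_cex bij_betw_def cex_leaf_def by (auto simp: eval_nat_numeral lessThan_Suc)

lemma node_classes_cex:
  "node_classes cex_parent 3 cex_leaf 1 = {0, 1}"
  "node_classes cex_parent 3 cex_leaf 2 = {0}"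
  "node_classes cex_parent 3 cex_leaf 3 = {1}"
  "node_classes cex_parent 3 cex_leaf 4 = {2}"
  unfolding node_classes_def is_anc_cex_iff cex_parent_def cex_leaf_def by auto

lemma expected_loss_cex:
  "expected_loss 5 cex_parent 3 cex_leaf \<pi> f =
     - (\<pi> 0 + \<pi> 1) * ln (f 0 + f 1) - \<pi> 0 * ln (f 0) - \<pi> 1 * ln (f 1) - \<pi> 2 * ln (f 2)"
proof -
  have "{1..<5::nat} = {1, 2, 3, 4}" by auto
  then show ?thesis
    unfolding expected_loss_eq_node_sum by (simp add: node_classes_cex node_classes_cex(1)[simplified] algebra_simps)
qed

lemma five_ln_2_gt_three_ln_3: "3 * ln 3 < 5 * ln (2::real)"
proof -
  have "ln (3 ^ 3) < ln (2 ^ 5 :: real)" by simp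
  then show ?thesis by (simp only: ln_realpow)
qed

theorem proposition2:
  shows "\<exists>N p K lf \<pi>. valid_tree N p \<and> bij_betw lf {..<K} {v. is_leaf N p v}
     \<and> \<pi> \<in> prob_simplex K \<and> (\<forall>k<K. 0 < \<pi> k)
     \<and> (\<exists>f. f \<in> prob_simplex K \<and> (\<forall>k<K. 0 < f k)
            \<and> expected_loss N p K lf \<pi> f < expected_loss N p K lf \<pi> \<pi>)"
proof -
  define \<pi> :: "nat \<Rightarrow> real" where "\<pi> k = (if k = 2 then 1/2 else 1/4)" for k
  define f :: "nat \<Rightarrow> real" where "f k = 1/3" for k
  have \<pi>: "\<pi> \<in> prob_simplex 3" "\<forall>k<3. 0 < \<pi> k"
    unfolding prob_simplex_def \<pi>_def by (auto simp: eval_nat_numeral lessThan_Suc)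
  have f: "f \<in> prob_simplex 3" "\<forall>k<3. 0 < f k"
    unfolding prob_simplex_def f_def by (auto simp: eval_nat_numeral lessThan_Suc)
  have "expected_loss 5 cex_parent 3 cex_leaf \<pi> f = 3/2 * ln 3 - 1/2 * ln 2"
    unfolding expected_loss_cex \<pi>_def f_def by (simp add: ln_div algebra_simps)
  also have "\<dots> < 2 * ln 2"
    using five_ln_2_gt_three_ln_3 by simp
  also have "2 * ln 2 = expected_loss 5 cex_parent 3 cex_leaf \<pi> \<pi>"
    using ln_realpow[of 2 2]
    unfolding expected_loss_cex \<pi>_def by (simp add: ln_div algebra_simps)
  finally show ?thesis
    using valid_tree_cex bij_betw_cex_leaf \<pi> f by blast
qed

end
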